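(* Let $k\ge2$, $q$, $r$ be integers with $1\le q\le k-1$, $0\le r\le k$, and $r\equiv k \pmod 2$. Let $\beta>0$, $J\in\mathbb{R}$, $\theta=\tanh(\beta J)$, $f_\theta(h)=\operatorname{arctanh}(\theta\tanh h)$, and let $(h_1,h_2)$ be any real solution of $h_1=q f_\theta(h_2)$, $h_2=k f_\theta(h_1)$. Let $h=\{h_x\}_{x\in V}$ be an alternating boundary condition with parameters $q,r,h_1,h_2$ on the half tree (defined in the context), and let $$a(t)=-\frac{1}{2\beta}\ln\big[4\cosh(t+\beta J)\cosh(t-\beta J)\big],\qquad F_n(h)=-\frac{1}{\beta|V_n|}\ln Z_n(h).$$ (a) If $r\neq0$, then $\lim_{n\to\infty}F_n(h)$ exists (whatever the value of $h$ at the root) and equals $$\frac{k(k-q)}{2k^2-rk-rq}\left(a(0)+\frac{k-r}{k-q}\,a(h_1)+\frac{q(k-r)}{k(k-q)}\,a(h_2)\right).$$ (b) If $r=0$ and the root value is $0$, $h_2$ or $-h_2$, then $$\lim_{m\to\infty}F_{2m}(h)=\frac{k-q}{k+1}a(0)+\frac{1}{k+1}a(h_1)+\frac{q}{k+1}a(h_2),\qquad \lim_{m\to\infty}F_{2m+1}(h)=\frac{k-q}{k(k+1)}a(0)+\frac{k}{k+1}a(h_1)+\frac{q}{k(k+1)}a(h_2);$$ if $r=0$ and the root value is $h_1$ or $-h_1$, then $$\lim_{m\to\infty}F_{2m}(h)=\frac{k-q}{k(k+1)}a(0)+\frac{k}{k+1}a(h_1)+\frac{q}{k(k+1)}a(h_2),\qquad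 \lim_{m\to\infty}F_{2m+1}(h)=\frac{k-q}{k+1}a(0)+\frac{1}{k+1}a(h_1)+\frac{q}{k+1}a(h_2).$$
   Context: Half tree: a rooted tree with vertex set $V$ and root $x^0$ in which every vertex (including the root) has exactly $k$ children; so the root has $k$ neighbours and every other vertex has $k+1$. $d(x,y)$ is the graph distance, $V_n=\{x: d(x,x^0)\le n\}$, $W_n=\{x:d(x,x^0)=n\}$, and for $x\in W_n$, $S(x)=\{y\in W_{n+1}: d(x,y)=1\}$ (the $k$ children of $x$). Ising model with zero external field: for a boundary condition $h=\{h_x\in\mathbb{R}\}_{x\in V}$, $$Z_n(h)=\sum_{\sigma\in\{-1,1\}^{V_n}}\exp\Big\{\beta J\sum_{\langle x,y\rangle\subset V_n}\sigma(x)\sigma(y)+\sum_{x\in W_n}h_x\sigma(x)\Big\},$$ where the first sum is over nearest-neighbour pairs with both endpoints in $V_n$. Alternating boundary condition with parameters $q,r,h_1,h_2$: the root is assigned a value $h_{x^0}\in\{0,\pm h_1,\pm h_2\}$, and values are assigned inductively to children: (i) if $h_x=0$, then $h_y=0$ on $r$ vertices $y\in S(x)$, $h_y=h_1$ on half of the remaining $k-r$ vertices of $S(x)$, and $h_y=-h_1$ on the other half; (ii) if $h_x=h_1$ (resp. $-h_1$), then $h_y=h_2$ (resp. $-h_2$) on $q$ vertices of $S(x)$ and $h_y=0$ on the other $k-q$; (iii) if $h_x=h_2$ (resp. $-h_2$), then $h_y=h_1$ (resp. $-h_1$) for all $y\in S(x)$. (The choice of which children receive which values is arbitrary.) *)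

theory Defs
  imports Complex_Main "HOL-Library.FuncSet"
begin

text \<open>Half tree: vertices are finite lists of child indices < k; the root is [],
  the children of x are i # x (i < k), so the parent of a non-root y is tl y and
  d(y, root) = length y.\<close>

definition htV :: "nat \<Rightarrow> nat list set" where
  "htV k = {x. \<forall>i\<in>set x. i < k}"

definition htVn :: "nat \<Rightarrow> nat \<Rightarrow> nat list set" where
  "htVn k n = {x \<in> htV k. length x \<le> n}"

definition htWn :: "nat \<Rightarrow> nat \<Rightarrow> nat list set" where
  "htWn k n = {x \<in> htV k. length x = n}"

text \<open>Partition function Z_n(h): configurations sigma on V_n with values in {-1,1};
  nearest-neighbour pairs inside V_n are exactly {y, tl y} with y in V_n, y non-root.\<close>

definition Zn :: "nat \<Rightarrow> real \<Rightarrow> real \<Rightarrow> nat \<Rightarrow> (nat list \<Rightarrow> real) \<Rightarrow> real" where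
  "Zn k beta J n h =
     (\<Sum>\<sigma>\<in>PiE (htVn k n) (\<lambda>_. {-1, 1}).
        exp (beta * J * (\<Sum>y\<in>htVn k n - {[]}. \<sigma> y * \<sigma> (tl y))
             + (\<Sum>x\<in>htWn k n. h x * \<sigma> x)))"

definition free_energy :: "nat \<Rightarrow> real \<Rightarrow> real \<Rightarrow> nat \<Rightarrow> (nat list \<Rightarrow> real) \<Rightarrow> real" where
  "free_energy k beta J n h = - ln (Zn k beta J n h) / (beta * real (card (htVn k n)))"

definition bc_val :: "real \<Rightarrow> real \<Rightarrow> int \<Rightarrow> real" where
  "bc_val h1 h2 l = (if l = 1 then h1 else if l = -1 then - h1
                     else if l = 2 then h2 else if l = -2 then - h2 else 0)"

definition alternating_labeling :: "nat \<Rightarrow> nat \<Rightarrow> nat \<Rightarrow> (nat list \<Rightarrow> int) \<Rightarrow> bool" where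
  "alternating_labeling k q r lab \<longleftrightarrow>
     lab [] \<in> {-2, -1, 0, 1, 2} \<and>
     (\<forall>x\<in>htV k.
        (lab x = 0 \<longrightarrow>
           card {i. i < k \<and> lab (i # x) = 0} = r \<and>
           card {i. i < k \<and> lab (i # x) = 1} = (k - r) div 2 \<and>
           card {i. i < k \<and> lab (i # x) = -1} = (k - r) div 2) \<and>
        (\<forall>s\<in>{-1, 1::int}. lab x = s \<longrightarrow>
           card {i. i < k \<and> lab (i # x) = 2 * s} = q \<and>
           card {i. i < k \<and> lab (i # x) = 0} = k - q) \<and>
        (\<forall>s\<in>{-1, 1::int}. lab x = 2 * s \<longrightarrow>
           (\<forall>i<k. lab (i # x) = s)))"

definition alternating_bc :: "nat \<Rightarrow> nat \<Rightarrow> nat \<Rightarrow> real \<Rightarrow> real \<Rightarrow> (nat list \<Rightarrow> int)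
    \<Rightarrow> (nat list \<Rightarrow> real) \<Rightarrow> bool" where
  "alternating_bc k q r h1 h2 lab h \<longleftrightarrow>
     alternating_labeling k q r lab \<and> (\<forall>x\<in>htV k. h x = bc_val h1 h2 (lab x))"

definition afun :: "real \<Rightarrow> real \<Rightarrow> real \<Rightarrow> real" where
  "afun beta J t = - (1 / (2 * beta)) * ln (4 * cosh (t + beta * J) * cosh (t - beta * J))"

end

theory Submission
  imports Defs
begin

text \<open>
  The alternating boundary field is compatible: at every vertex its value is the sum over the
  children of \<open>f\<^sub>\<theta>\<close> of the children's values, which is what the equations for
  \<open>(h1, h2)\<close> say. Summing out the spins of the outermost level therefore gives
  \<open>Z\<^sub>n\<^sub>+\<^sub>1(h) = exp(-\<beta> E\<^sub>n\<^sub>+\<^sub>1) Z\<^sub>n(h)\<close>, where \<open>E\<^sub>j\<close> is the sum of \<open>a(h\<^sub>y)\<close> over the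
  level \<open>W\<^sub>j\<close>. As \<open>|V\<^sub>n|\<close> grows like \<open>k\<^sup>n\<close>, the Stolz-Cesaro theorem reduces the free
  energy to the level means \<open>E\<^sub>j / k\<^sup>j\<close>, i.e. to the fractions of level \<open>j\<close> labelled
  \<open>0, \<plusminus>h1, \<plusminus>h2\<close>. These fractions evolve by a stochastic matrix whose other eigenvalues
  solve \<open>\<lambda>\<^sup>2 + (k - r)/k \<lambda> - rq/k\<^sup>2 = 0\<close>: for \<open>r > 0\<close> they lie inside the unit disc
  and the fractions converge, while for \<open>r = 0\<close> the fraction labelled \<open>\<plusminus>h1\<close> alternates
  between \<open>0\<close> and \<open>1\<close>, which produces the two limits along even and odd \<open>n\<close>.
\<close>

section \<open>The half tree\<close>

lemma htWn_0: "htWn k 0 = {[]}"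
  by (auto simp: htWn_def htV_def)

lemma htVn_0: "htVn k 0 = {[]}"
  by (auto simp: htVn_def htV_def)

lemma htWn_Suc: "htWn k (Suc n) = (\<lambda>(i, x). i # x) ` ({..<k} \<times> htWn k n)"
proof (rule set_eqI)
  fix y
  show "y \<in> htWn k (Suc n) \<longleftrightarrow> y \<in> (\<lambda>(i, x). i # x) ` ({..<k} \<times> htWn k n)"
    by (cases y) (auto simp: htWn_def htV_def)
qed

lemma finite_htWn: "finite (htWn k n)"
  by (induction n) (simp_all add: htWn_0 htWn_Suc)

lemma sum_htWn_Suc: "(\<Sum>y\<in>htWn k (Suc n). g y) = (\<Sum>x\<in>htWn k n. \<Sum>i<k. g (i # x))"
proof -
  have "inj_on (\<lambda>(i, x). i # x) ({..<k} \<times> htWn k n)"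
    by (auto simp: inj_on_def)
  then have "(\<Sum>y\<in>htWn k (Suc n). g y) = (\<Sum>(i, x)\<in>{..<k} \<times> htWn k n. g (i # x))"
    unfolding htWn_Suc by (simp add: sum.reindex split_def)
  also have "\<dots> = (\<Sum>x\<in>htWn k n. \<Sum>i<k. g (i # x))"
    by (simp add: sum.cartesian_product[symmetric] sum.swap[of _ "{..<k}"])
  finally show ?thesis .
qed

lemma card_htWn: "card (htWn k n) = k ^ n"
proof (induction n)
  case (Suc n)
  have "card (htWn k (Suc n)) = (\<Sum>x\<in>htWn k n. \<Sum>i<k. 1)"
    using sum_htWn_Suc[where g = "\<lambda>_. 1::nat"] by simp
  with Suc show ?case by simp
qed (simp add: htWn_0)

lemma htVn_Suc: "htVn k (Suc n) = htVn k n \<union> htWn k (Suc n)"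
  by (auto simp: htVn_def htWn_def)

lemma htVn_disjoint_htWn_Suc: "htVn k n \<inter> htWn k (Suc n) = {}"
  by (auto simp: htVn_def htWn_def)

lemma finite_htVn: "finite (htVn k n)"
  by (induction n) (simp_all add: htVn_0 htVn_Suc finite_htWn)

lemma card_htVn_Suc: "card (htVn k (Suc n)) = card (htVn k n) + k ^ Suc n"
  by (simp add: htVn_Suc card_Un_disjoint finite_htVn finite_htWn htVn_disjoint_htWn_Suc card_htWn)

lemma htWn_subset_htVn: "htWn k n \<subseteq> htVn k n"
  by (auto simp: htWn_def htVn_def)

lemma tl_mem_htWn: "y \<in> htWn k (Suc n) \<Longrightarrow> tl y \<in> htWn k n"
  by (cases y) (auto simp: htWn_def htV_def)

lemma tl_mem_htVn: "y \<in> htVn k n \<Longrightarrow> tl y \<in> htVn k n"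
  by (cases y) (auto simp: htVn_def htV_def)

section \<open>Summing out the outermost level\<close>

definition f_theta :: "real \<Rightarrow> real \<Rightarrow> real \<Rightarrow> real" where
  "f_theta beta J t = artanh (tanh (beta * J) * tanh t)"

lemma f_theta_eq_ln_cosh:
  "f_theta beta J t = (ln (cosh (t + beta * J)) - ln (cosh (t - beta * J))) / 2"
proof -
  have "1 + tanh (beta * J) * tanh t = cosh (t + beta * J) / (cosh t * cosh (beta * J))"
    and "1 - tanh (beta * J) * tanh t = cosh (t - beta * J) / (cosh t * cosh (beta * J))"
    by (simp_all add: tanh_def cosh_add cosh_diff field_simps)
  then show ?thesis
    by (simp add: f_theta_def artanh_def ln_div)
qed

lemma two_cosh_eq_exp_afun_f_theta:
  assumes "beta > 0" and "s \<in> {-1, 1}"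
  shows "2 * cosh (t + beta * J * s) = exp (- beta * afun beta J t + f_theta beta J t * s)"
proof -
  have "- beta * afun beta J t = ln 2 + (ln (cosh (t + beta * J)) + ln (cosh (t - beta * J))) / 2"
    using assms(1) ln_mult[of 2 2] by (simp add: afun_def ln_mult)
  then have "- beta * afun beta J t + f_theta beta J t * s = ln (2 * cosh (t + beta * J * s))"
    using assms(2) by (auto simp: f_theta_eq_ln_cosh ln_mult field_simps)
  then show ?thesis
    by simp
qed

lemma cosh_minus_add_eq: "cosh (- t + b) = cosh (t - b)" for t b :: real
  using cosh_minus[of "t - b"] by simp

lemma cosh_minus_diff_eq: "cosh (- t - b) = cosh (t + b)" for t b :: real
  using cosh_minus[of "t + b"] by simp

lemma f_theta_0 [simp]: "f_theta beta J 0 = 0"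
  by (simp add: f_theta_def)

lemma f_theta_minus: "f_theta beta J (- t) = - f_theta beta J t"
  by (simp only: f_theta_eq_ln_cosh cosh_minus_add_eq cosh_minus_diff_eq) (simp add: field_simps)

lemma afun_minus: "afun beta J (- t) = afun beta J t"
  by (simp only: afun_def cosh_minus_add_eq cosh_minus_diff_eq mult_ac)

lemma sum_PiE_Un_restrict:
  assumes "A \<inter> B = {}"
    and "\<And>\<sigma>. \<sigma> \<in> PiE (A \<union> B) S \<Longrightarrow> f \<sigma> = g (restrict \<sigma> A) (restrict \<sigma> B)"
  shows "(\<Sum>\<sigma>\<in>PiE (A \<union> B) S. f \<sigma>) = (\<Sum>\<sigma>\<in>PiE A S. \<Sum>\<tau>\<in>PiE B S. g \<sigma> \<tau>)"
proof -
  have "bij_betw (\<lambda>\<sigma>. (restrict \<sigma> A, restrict \<sigma> B)) (PiE (A \<union> B) S) (PiE A S \<times> PiE B S)"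
    using assms(1)
    by (intro bij_betwI[where g = "\<lambda>(\<sigma>, \<tau>) x. if x \<in> A then \<sigma> x else \<tau> x"])
       (auto simp: PiE_def Pi_def extensional_def fun_eq_iff)
  then have "(\<Sum>\<sigma>\<in>PiE (A \<union> B) S. f \<sigma>) = (\<Sum>(\<sigma>, \<tau>)\<in>PiE A S \<times> PiE B S. g \<sigma> \<tau>)"
    using assms(2) by (simp add: sum.reindex_bij_betw[symmetric] split_def cong: sum.cong)
  then show ?thesis
    by (simp add: sum.cartesian_product)
qed

lemma Zn_Suc_eq_sum_prod:
  "Zn k beta J (Suc n) h =
     (\<Sum>\<sigma>\<in>PiE (htVn k n) (\<lambda>_. {-1, 1}).
        exp (beta * J * (\<Sum>y\<in>htVn k n - {[]}. \<sigma> y * \<sigma> (tl y))) *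
        (\<Prod>y\<in>htWn k (Suc n). 2 * cosh (h y + beta * J * \<sigma> (tl y))))"
proof -
  define V W S where "V = htVn k n" and "W = htWn k (Suc n)" and "S = (\<lambda>_::nat list. {-1, 1::real})"
  define E where "E \<sigma> = exp (beta * J * (\<Sum>y\<in>V - {[]}. \<sigma> y * \<sigma> (tl y)))" for \<sigma> :: "nat list \<Rightarrow> real"
  have disj: "V \<inter> W = {}"
    by (simp add: V_def W_def htVn_disjoint_htWn_Suc)
  have tl_V: "tl y \<in> V" if "y \<in> V \<union> W" for y
    using that tl_mem_htVn tl_mem_htWn htWn_subset_htVn by (fastforce simp: V_def W_def)
  have nonroot: "V \<union> W - {[]} = (V - {[]}) \<union> W"
    by (auto simp: W_def htWn_def)
  have energy: "exp (beta * J * (\<Sum>y\<in>V \<union> W - {[]}. \<sigma> y * \<sigma> (tl y)) + (\<Sum>x\<in>W. h x * \<sigma> x))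
      = E (restrict \<sigma> V) *
        (\<Prod>y\<in>W. exp (beta * J * restrict \<sigma> W y * restrict \<sigma> V (tl y) + h y * restrict \<sigma> W y))"
    for \<sigma>
  proof -
    have "(\<Sum>y\<in>V \<union> W - {[]}. \<sigma> y * \<sigma> (tl y))
        = (\<Sum>y\<in>V - {[]}. \<sigma> y * \<sigma> (tl y)) + (\<Sum>y\<in>W. \<sigma> y * \<sigma> (tl y))"
      unfolding nonroot using disj
      by (intro sum.union_disjoint) (auto simp: V_def W_def finite_htVn finite_htWn)
    moreover have "E (restrict \<sigma> V) = exp (beta * J * (\<Sum>y\<in>V - {[]}. \<sigma> y * \<sigma> (tl y)))"
      using tl_V by (auto simp: E_def intro!: sum.cong)
    moreover have "(\<Prod>y\<in>W. exp (beta * J * restrict \<sigma> W y * restrict \<sigma> V (tl y) + h y * restrict \<sigma> W y))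
        = exp (\<Sum>y\<in>W. beta * J * \<sigma> y * \<sigma> (tl y) + h y * \<sigma> y)"
      using tl_V by (auto simp: exp_sum W_def finite_htWn intro!: prod.cong)
    ultimately show ?thesis
      by (simp add: exp_add[symmetric] sum.distrib sum_distrib_left algebra_simps)
  qed
  have leaf: "(\<Sum>s\<in>{-1, 1}. exp (beta * J * s * t + h y * s)) = 2 * cosh (h y + beta * J * t)"
    for y t
    by (simp add: cosh_field_def exp_minus algebra_simps)
  have "Zn k beta J (Suc n) h = (\<Sum>\<sigma>\<in>PiE V S. \<Sum>\<tau>\<in>PiE W S.
          E \<sigma> * (\<Prod>y\<in>W. exp (beta * J * \<tau> y * \<sigma> (tl y) + h y * \<tau> y)))"
    unfolding Zn_def htVn_Suc V_def[symmetric] W_def[symmetric] S_def[symmetric]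
    by (rule sum_PiE_Un_restrict[OF disj, where g = "\<lambda>\<sigma> \<tau>. E \<sigma> *
          (\<Prod>y\<in>W. exp (beta * J * \<tau> y * \<sigma> (tl y) + h y * \<tau> y))", OF energy])
  also have "\<dots> = (\<Sum>\<sigma>\<in>PiE V S. E \<sigma> *
      (\<Prod>y\<in>W. \<Sum>s\<in>{-1, 1}. exp (beta * J * s * \<sigma> (tl y) + h y * s)))"
  proof (intro sum.cong refl)
    fix \<sigma> :: "nat list \<Rightarrow> real"
    show "(\<Sum>\<tau>\<in>PiE W S. E \<sigma> * (\<Prod>y\<in>W. exp (beta * J * \<tau> y * \<sigma> (tl y) + h y * \<tau> y)))
        = E \<sigma> * (\<Prod>y\<in>W. \<Sum>s\<in>{-1, 1}. exp (beta * J * s * \<sigma> (tl y) + h y * s))"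
      using prod_sum_PiE[of W "\<lambda>_. {-1, 1::real}" "\<lambda>y s. exp (beta * J * s * \<sigma> (tl y) + h y * s)"]
      by (simp add: sum_distrib_left[symmetric] S_def W_def finite_htWn)
  qed
  finally show ?thesis
    by (simp only: leaf E_def V_def W_def S_def)
qed

(* Summing out the spins of level n + 1 turns the fields of the children into the field of
   their parent exactly when the boundary field is compatible. *)
definition compatible_bc :: "nat \<Rightarrow> real \<Rightarrow> real \<Rightarrow> (nat list \<Rightarrow> real) \<Rightarrow> bool" where
  "compatible_bc k beta J h \<longleftrightarrow> (\<forall>x\<in>htV k. h x = (\<Sum>i<k. f_theta beta J (h (i # x))))"

definition level_energy :: "nat \<Rightarrow> real \<Rightarrow> real \<Rightarrow> (nat list \<Rightarrow> real) \<Rightarrow> nat \<Rightarrow> real" where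
  "level_energy k beta J h n = (\<Sum>y\<in>htWn k n. afun beta J (h y))"

lemma Zn_pos: "Zn k beta J n h > 0"
  unfolding Zn_def by (intro sum_pos) (auto simp: finite_PiE finite_htVn PiE_eq_empty_iff)

lemma Zn_Suc:
  assumes "beta > 0" and "compatible_bc k beta J h"
  shows "Zn k beta J (Suc n) h = exp (- beta * level_energy k beta J h (Suc n)) * Zn k beta J n h"
proof -
  define W where "W = htWn k (Suc n)"
  have "(\<Prod>y\<in>W. 2 * cosh (h y + beta * J * \<sigma> (tl y)))
      = exp (- beta * level_energy k beta J h (Suc n)) * exp (\<Sum>x\<in>htWn k n. h x * \<sigma> x)"
    if "\<sigma> \<in> PiE (htVn k n) (\<lambda>_. {-1, 1})" for \<sigma>
  proof -
    have "(\<Sum>y\<in>W. f_theta beta J (h y) * \<sigma> (tl y))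
        = (\<Sum>x\<in>htWn k n. (\<Sum>i<k. f_theta beta J (h (i # x))) * \<sigma> x)"
      by (simp add: W_def sum_htWn_Suc sum_distrib_right)
    also have "\<dots> = (\<Sum>x\<in>htWn k n. h x * \<sigma> x)"
      using assms(2) by (auto simp: compatible_bc_def htWn_def)
    finally have field: "(\<Sum>y\<in>W. f_theta beta J (h y) * \<sigma> (tl y)) = (\<Sum>x\<in>htWn k n. h x * \<sigma> x)" .
    have "\<sigma> (tl y) \<in> {-1, 1}" if "y \<in> W" for y
      using \<open>\<sigma> \<in> _\<close> that tl_mem_htWn htWn_subset_htVn by (fastforce simp: W_def)
    then have "(\<Prod>y\<in>W. 2 * cosh (h y + beta * J * \<sigma> (tl y)))
        = exp (\<Sum>y\<in>W. - beta * afun beta J (h y) + f_theta beta J (h y) * \<sigma> (tl y))"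
      by (simp add: exp_sum W_def finite_htWn two_cosh_eq_exp_afun_f_theta[OF assms(1)] cong: prod.cong)
    then show ?thesis
      unfolding sum.distrib field by (simp add: level_energy_def W_def[symmetric] sum_distrib_left exp_add)
  qed
  then show ?thesis
    unfolding Zn_Suc_eq_sum_prod W_def[symmetric]
    by (simp add: Zn_def sum_distrib_left exp_add mult_ac cong: sum.cong)
qed

lemma ln_Zn_Suc:
  assumes "beta > 0" and "compatible_bc k beta J h"
  shows "- ln (Zn k beta J (Suc n) h) / beta = - ln (Zn k beta J n h) / beta + level_energy k beta J h (Suc n)"
  using assms(1) Zn_pos[of k beta J n h] by (simp add: Zn_Suc[OF assms] ln_mult field_simps)

section \<open>From level energies to the free energy\<close>

lemma stolz_cesaro:
  fixes x y :: "nat \<Rightarrow> real"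
  assumes incr: "\<And>m. y m < y (Suc m)"
    and unbounded: "filterlim y at_top sequentially"
    and ratio: "(\<lambda>m. (x (Suc m) - x m) / (y (Suc m) - y m)) \<longlonglongrightarrow> L"
  shows "(\<lambda>m. x m / y m) \<longlonglongrightarrow> L"
proof (rule LIMSEQ_I)
  fix \<epsilon> :: real
  assume "\<epsilon> > 0"
  define z where "z m = x m - L * y m" for m
  obtain N where N: "\<And>m. m \<ge> N \<Longrightarrow> \<bar>(x (Suc m) - x m) / (y (Suc m) - y m) - L\<bar> < \<epsilon> / 2"
    using LIMSEQ_D[OF ratio, of "\<epsilon> / 2"] \<open>\<epsilon> > 0\<close> by auto
  have increment: "\<bar>z (Suc m) - z m\<bar> \<le> \<epsilon> / 2 * (y (Suc m) - y m)" if "m \<ge> N" for m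
  proof -
    have "\<bar>z (Suc m) - z m\<bar> = \<bar>(x (Suc m) - x m) / (y (Suc m) - y m) - L\<bar> * (y (Suc m) - y m)"
      using incr[of m] by (simp add: z_def abs_mult_pos[symmetric] field_simps)
    also have "\<dots> \<le> \<epsilon> / 2 * (y (Suc m) - y m)"
      using N[OF that] incr[of m] by (intro mult_right_mono) auto
    finally show ?thesis .
  qed
  have acc: "\<bar>z m - z N\<bar> \<le> \<epsilon> / 2 * (y m - y N)" if "m \<ge> N" for m
    using that
  proof (induction m rule: dec_induct)
    case (step m)
    have "\<bar>z (Suc m) - z N\<bar> \<le> \<bar>z (Suc m) - z m\<bar> + \<bar>z m - z N\<bar>"
      by (rule abs_triangle_ineq[of "z (Suc m) - z m" "z m - z N", simplified])
    then show ?case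
      using increment[of m] step by (simp add: algebra_simps)
  qed simp
  have "eventually (\<lambda>m. (\<bar>z N\<bar> + \<epsilon> / 2 * \<bar>y N\<bar>) / (\<epsilon> / 2) < y m \<and> 0 < y m \<and> N \<le> m) sequentially"
    using unbounded \<open>\<epsilon> > 0\<close>
    by (auto simp: filterlim_at_top_dense intro!: eventually_conj eventually_ge_at_top)
  then obtain M where M: "\<And>m. m \<ge> M \<Longrightarrow>
      (\<bar>z N\<bar> + \<epsilon> / 2 * \<bar>y N\<bar>) / (\<epsilon> / 2) < y m \<and> 0 < y m \<and> N \<le> m"
    unfolding eventually_sequentially by blast
  have "\<bar>x m / y m - L\<bar> < \<epsilon>" if "m \<ge> M" for m
  proof -
    have big: "\<bar>z N\<bar> + \<epsilon> / 2 * \<bar>y N\<bar> < \<epsilon> / 2 * y m" and pos: "y m > 0" and "N \<le> m"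
      using M[OF that] \<open>\<epsilon> > 0\<close> by (auto simp: field_simps)
    have "\<bar>z m\<bar> \<le> \<bar>z N\<bar> + \<epsilon> / 2 * (y m - y N)"
      using acc[OF \<open>N \<le> m\<close>] by linarith
    also have "\<dots> \<le> \<bar>z N\<bar> + \<epsilon> / 2 * \<bar>y N\<bar> + \<epsilon> / 2 * y m"
      using mult_left_mono[OF abs_ge_minus_self[of "y N"], of "\<epsilon> / 2"] \<open>\<epsilon> > 0\<close>
      by (simp add: right_diff_distrib)
    finally have "\<bar>z m\<bar> < \<epsilon> * y m"
      using big by linarith
    then show ?thesis
      using pos by (simp add: z_def abs_div_pos[symmetric] diff_divide_distrib[symmetric]) (simp add: field_simps)
  qed
  then show "\<exists>M. \<forall>m\<ge>M. norm (x m / y m - L) < \<epsilon>"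
    by auto
qed

lemma free_energy_subseq_tendsto:
  assumes "beta > 0" and "k \<ge> 1" and "compatible_bc k beta J h" and "strict_mono g"
    and "(\<lambda>m. (\<Sum>j = g m..<g (Suc m). level_energy k beta J h (Suc j))
              / (\<Sum>j = g m..<g (Suc m). real k ^ Suc j)) \<longlonglongrightarrow> L"
  shows "(\<lambda>m. free_energy k beta J (g m) h) \<longlonglongrightarrow> L"
proof -
  define x where "x n = - ln (Zn k beta J n h) / beta" for n
  define y where "y n = real (card (htVn k n))" for n
  have less: "g m < g (Suc m)" for m
    using assms(4) by (simp add: strict_mono_Suc_iff)
  have "x (Suc n) - x n = level_energy k beta J h (Suc n)" for n
    unfolding x_def ln_Zn_Suc[OF assms(1,3)] by simp
  then have dx: "x (g (Suc m)) - x (g m) = (\<Sum>j = g m..<g (Suc m). level_energy k beta J h (Suc j))" for m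
    using sum_Suc_diff'[of "g m" "g (Suc m)" x] less[of m] by simp
  have "y (Suc n) - y n = real k ^ Suc n" for n
    by (simp add: y_def card_htVn_Suc)
  then have dy: "y (g (Suc m)) - y (g m) = (\<Sum>j = g m..<g (Suc m). real k ^ Suc j)" for m
    using sum_Suc_diff'[of "g m" "g (Suc m)" y] less[of m] by simp
  have y_ge: "real n \<le> y n" for n
  proof (induction n)
    case (Suc n)
    have "1 \<le> real k ^ Suc n"
      using assms(2) by (intro one_le_power) simp
    with Suc show ?case
      by (simp add: y_def card_htVn_Suc)
  qed (simp add: y_def)
  have "(\<lambda>m. x (g m) / y (g m)) \<longlonglongrightarrow> L"
  proof (rule stolz_cesaro)
    show "y (g m) < y (g (Suc m))" for m
    proof -
      have "0 < (\<Sum>j = g m..<g (Suc m). real k ^ Suc j)"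
        using less[of m] assms(2) by (intro sum_pos) auto
      then show ?thesis
        using dy[of m] by linarith
    qed
    have "real m \<le> y (g m)" for m
      using y_ge[of "g m"] seq_suble[OF assms(4), of m] by linarith
    then show "filterlim (\<lambda>m. y (g m)) at_top sequentially"
      by (intro filterlim_at_top_mono[OF filterlim_real_sequentially]) auto
    show "(\<lambda>m. (x (g (Suc m)) - x (g m)) / (y (g (Suc m)) - y (g m))) \<longlonglongrightarrow> L"
      unfolding dx dy by (rule assms(5))
  qed
  then show ?thesis
    by (simp add: free_energy_def x_def y_def)
qed

lemma free_energy_tendsto:
  assumes "beta > 0" and "k \<ge> 1" and "compatible_bc k beta J h"
    and "(\<lambda>n. level_energy k beta J h n / real k ^ n) \<longlonglongrightarrow> L"
  shows "(\<lambda>n. free_energy k beta J n h) \<longlonglongrightarrow> L"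
  using free_energy_subseq_tendsto[OF assms(1-3) strict_mono_id] LIMSEQ_Suc[OF assms(4)]
  by simp

lemma free_energy_two_periodic_tendsto:
  assumes "beta > 0" and "k \<ge> 1" and "compatible_bc k beta J h"
    and "\<And>m. level_energy k beta J h (2 * m + c + 1) = u * real k ^ (2 * m + c + 1)"
    and "\<And>m. level_energy k beta J h (2 * m + c + 2) = v * real k ^ (2 * m + c + 2)"
  shows "(\<lambda>m. free_energy k beta J (2 * m + c) h) \<longlonglongrightarrow> (u + real k * v) / (real k + 1)"
proof -
  have "strict_mono (\<lambda>m. 2 * m + c)"
    by (simp add: strict_mono_Suc_iff)
  moreover have "(\<Sum>j = 2 * m + c..<2 * Suc m + c. level_energy k beta J h (Suc j))
      / (\<Sum>j = 2 * m + c..<2 * Suc m + c. real k ^ Suc j) = (u + real k * v) / (real k + 1)" for m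
  proof -
    have "{2 * m + c..<2 * Suc m + c} = {2 * m + c, 2 * m + c + 1}"
      by auto
    moreover have "(u * real k ^ (2 * m + c + 1) + v * real k ^ (2 * m + c + 2))
        / (real k ^ (2 * m + c + 1) + real k ^ (2 * m + c + 2)) = (u + real k * v) / (real k + 1)"
    proof -
      define P where "P = real k ^ (2 * m + c + 1)"
      have "P > 0"
        using assms(2) by (simp add: P_def)
      have "real k ^ (2 * m + c + 2) = real k * P"
        by (simp add: P_def)
      then have "(u * P + v * real k ^ (2 * m + c + 2)) / (P + real k ^ (2 * m + c + 2))
          = (P * (u + real k * v)) / (P * (real k + 1))"
        by (simp only:) (simp add: algebra_simps)
      with \<open>P > 0\<close> show ?thesis
        unfolding P_def[symmetric] by simp
    qed
    ultimately show ?thesis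
      using assms(4,5) by (simp add: add_ac)
  qed
  ultimately show ?thesis
    using free_energy_subseq_tendsto[OF assms(1-3), of "\<lambda>m. 2 * m + c"] by simp
qed

section \<open>Level densities\<close>

lemma linear_recurrence2_tendsto_zero:
  fixes u :: "nat \<Rightarrow> real"
  assumes small: "\<bar>a\<bar> + \<bar>b\<bar> < 1" and rec: "\<And>j. u (Suc (Suc j)) = a * u (Suc j) + b * u j"
  shows "u \<longlonglongrightarrow> 0"
proof -
  define s where "s = sqrt (a\<^sup>2 + 4 * \<bar>b\<bar>)"
  define \<rho> where "\<rho> = (\<bar>a\<bar> + s) / 2"
  define \<alpha> where "\<alpha> = (s - \<bar>a\<bar>) / 2"
  have "\<bar>a\<bar> \<le> s"
    unfolding s_def by (rule real_le_rsqrt) simp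
  have "s < 2 - \<bar>a\<bar>"
    unfolding s_def using small by (intro real_less_lsqrt) (simp_all add: power2_eq_square algebra_simps)
  have "s\<^sup>2 = a\<^sup>2 + 4 * \<bar>b\<bar>"
    unfolding s_def by simp
  then have \<rho>\<alpha>: "\<rho> * \<alpha> = \<bar>b\<bar>"
    by (simp add: \<rho>_def \<alpha>_def power2_eq_square algebra_simps)
  have "0 \<le> \<alpha>" and "0 \<le> \<rho>" and "\<rho> < 1"
    using \<open>\<bar>a\<bar> \<le> s\<close> \<open>s < 2 - \<bar>a\<bar>\<close> by (simp_all add: \<rho>_def \<alpha>_def)
  have \<rho>_eq: "\<rho> = \<bar>a\<bar> + \<alpha>"
    by (simp add: \<rho>_def \<alpha>_def field_simps)
  \<comment> \<open>\<open>\<rho>\<close> is the positive root of \<open>\<rho>\<^sup>2 = \<bar>a\<bar> \<rho> + \<bar>b\<bar>\<close>, so \<open>V\<close> contracts by the factor \<open>\<rho> < 1\<close>.\<close>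
  define V where "V j = \<bar>u (Suc j)\<bar> + \<alpha> * \<bar>u j\<bar>" for j
  have "V (Suc j) \<le> \<rho> * V j" for j
  proof -
    have "\<bar>u (Suc (Suc j))\<bar> \<le> \<bar>a\<bar> * \<bar>u (Suc j)\<bar> + \<bar>b\<bar> * \<bar>u j\<bar>"
      unfolding rec by (metis abs_mult abs_triangle_ineq)
    then have "V (Suc j) \<le> (\<bar>a\<bar> + \<alpha>) * \<bar>u (Suc j)\<bar> + \<bar>b\<bar> * \<bar>u j\<bar>"
      by (simp add: V_def algebra_simps)
    also have "\<dots> = \<rho> * V j"
      unfolding V_def \<rho>\<alpha>[symmetric] \<rho>_eq[symmetric] by (simp add: algebra_simps)
    finally show ?thesis .
  qed
  then have V_le: "V j \<le> \<rho> ^ j * V 0" for j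
  proof (induction j)
    case (Suc j)
    then show ?case
      using mult_left_mono[OF Suc.IH \<open>0 \<le> \<rho>\<close>] order.trans by (simp add: mult.assoc) blast
  qed simp
  have lim: "(\<lambda>j. \<rho> ^ j * V 0) \<longlonglongrightarrow> 0"
    using \<open>0 \<le> \<rho>\<close> \<open>\<rho> < 1\<close> by (intro tendsto_mult_left_zero LIMSEQ_power_zero) auto
  have "norm (u (Suc j)) \<le> norm (\<rho> ^ j * V 0) * 1" for j
  proof -
    have "\<bar>u (Suc j)\<bar> \<le> V j"
      using \<open>0 \<le> \<alpha>\<close> by (simp add: V_def)
    then show ?thesis
      using V_le[of j] abs_ge_self[of "\<rho> ^ j * V 0"] unfolding real_norm_def mult_1_right by linarith
  qed
  then have "(\<lambda>j. u (Suc j)) \<longlonglongrightarrow> 0"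
    by (intro tendsto_0_le[OF lim] always_eventually allI)
  then show ?thesis
    by (rule LIMSEQ_imp_Suc)
qed

lemma alternating_denominator_pos:
  fixes k q r :: real
  assumes "0 \<le> q" and "q < k" and "r \<le> k"
  shows "0 < 2 * k\<^sup>2 - r * k - r * q"
proof -
  have "2 * k\<^sup>2 - r * k - r * q = k * (k - r) + k * (k - q) + q * (k - r)"
    by (simp add: power2_eq_square algebra_simps)
  moreover have "k * (k - q) > 0" and "k * (k - r) \<ge> 0" and "q * (k - r) \<ge> 0"
    using assms by simp_all
  ultimately show ?thesis
    by linarith
qed

lemma level_density_tendsto:
  fixes k q r :: real and N0 N1 N2 :: "nat \<Rightarrow> real"
  assumes "0 \<le> q" "q < k" "0 < r" "r \<le> k"
    and R1: "\<And>j. N1 (Suc j) = (k - r) * N0 j + k * N2 j"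
    and R2: "\<And>j. N2 (Suc j) = q * N1 j"
    and S: "\<And>j. N0 j + N1 j + N2 j = k ^ j"
  shows "(\<lambda>j. N1 j / k ^ j) \<longlonglongrightarrow> k * (k - r) / (2 * k\<^sup>2 - r * k - r * q)"
proof -
  define D where "D = 2 * k\<^sup>2 - r * k - r * q"
  define c where "c = k * (k - r) / D"
  define u where "u j = N1 j / k ^ j - c" for j
  have "k > 0" and "D > 0"
    using assms(1,2,4) alternating_denominator_pos[of q k r] by (simp_all add: D_def)
  have N1_rec: "N1 (Suc (Suc j)) = (k - r) * k ^ Suc j - (k - r) * N1 (Suc j) + r * q * N1 j" for j
  proof -
    have N0_eq: "N0 (Suc j) = k ^ Suc j - N1 (Suc j) - q * N1 j"
      using S[of "Suc j"] R2[of j] by simp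
    show ?thesis
      unfolding R1[of "Suc j"] R2 N0_eq by (simp add: algebra_simps)
  qed
  define A B where "A = (k - r) / k" and "B = r * q / k\<^sup>2"
  have rec: "u (Suc (Suc j)) = - A * u (Suc j) + B * u j" for j
  proof -
    have "N1 (Suc (Suc j)) / k ^ Suc (Suc j) = A - A * (N1 (Suc j) / k ^ Suc j) + B * (N1 j / k ^ j)"
      using \<open>k > 0\<close> unfolding N1_rec A_def B_def by (simp add: field_simps power2_eq_square)
    moreover have "c = A - A * c + B * c"
    proof -
      have "c * D = k * (k - r)"
        using \<open>D > 0\<close> by (simp add: c_def)
      then have "k\<^sup>2 * c = k * (k - r) - k * (k - r) * c + r * q * c"
        by (simp add: D_def power2_eq_square algebra_simps)
      then show ?thesis
        using \<open>k > 0\<close> by (simp add: A_def B_def field_simps power2_eq_square)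
    qed
    ultimately show ?thesis
      unfolding u_def by (simp add: algebra_simps)
  qed
  have small: "\<bar>- A\<bar> + \<bar>B\<bar> < 1"
  proof -
    have "k * (k - r) + r * q < k\<^sup>2"
      using assms by (simp add: power2_eq_square algebra_simps)
    then show ?thesis
      using assms \<open>k > 0\<close> by (simp add: A_def B_def field_simps power2_eq_square)
  qed
  have "u \<longlonglongrightarrow> 0"
    using small rec by (rule linear_recurrence2_tendsto_zero[where u = u])
  then have "(\<lambda>j. u j + c) \<longlonglongrightarrow> 0 + c"
    by (intro tendsto_add tendsto_const)
  then show ?thesis
    by (simp add: u_def c_def D_def)
qed

lemma level_mean_tendsto:
  fixes k q r a0 a1 a2 :: real and N0 N1 N2 :: "nat \<Rightarrow> real"
  assumes "0 \<le> q" "q < k" "0 < r" "r \<le> k"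
    and R1: "\<And>j. N1 (Suc j) = (k - r) * N0 j + k * N2 j"
    and R2: "\<And>j. N2 (Suc j) = q * N1 j"
    and S: "\<And>j. N0 j + N1 j + N2 j = k ^ j"
  shows "(\<lambda>j. (N0 j * a0 + N1 j * a1 + N2 j * a2) / k ^ j)
    \<longlonglongrightarrow> (k * (k - q) * a0 + k * (k - r) * a1 + q * (k - r) * a2) / (2 * k\<^sup>2 - r * k - r * q)"
proof -
  define D where "D = 2 * k\<^sup>2 - r * k - r * q"
  define c where "c = k * (k - r) / D"
  have "k > 0" and "D > 0"
    using assms(1,2,4) alternating_denominator_pos[of q k r] by (simp_all add: D_def)
  have d1: "(\<lambda>j. N1 j / k ^ j) \<longlonglongrightarrow> c"
    unfolding c_def D_def using assms by (rule level_density_tendsto)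
  have "(\<lambda>j. N2 (Suc j) / k ^ Suc j) \<longlonglongrightarrow> q / k * c"
    using tendsto_mult_left[OF d1, of "q / k"] \<open>k > 0\<close> by (simp add: R2)
  then have d2: "(\<lambda>j. N2 j / k ^ j) \<longlonglongrightarrow> q / k * c"
    by (rule LIMSEQ_imp_Suc)
  have "(N0 j * a0 + N1 j * a1 + N2 j * a2) / k ^ j
      = a0 + N1 j / k ^ j * (a1 - a0) + N2 j / k ^ j * (a2 - a0)" for j
  proof -
    have "N0 j = k ^ j - N1 j - N2 j"
      using S[of j] by simp
    then show ?thesis
      using \<open>k > 0\<close> by (simp only:) (simp add: field_simps)
  qed
  moreover have "(\<lambda>j. a0 + N1 j / k ^ j * (a1 - a0) + N2 j / k ^ j * (a2 - a0))
      \<longlonglongrightarrow> a0 + c * (a1 - a0) + q / k * c * (a2 - a0)"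
    by (intro tendsto_intros d1 d2)
  moreover have "a0 + c * (a1 - a0) + q / k * c * (a2 - a0)
      = (k * (k - q) * a0 + k * (k - r) * a1 + q * (k - r) * a2) / D"
  proof -
    have cD: "c * D = k * (k - r)"
      using \<open>D > 0\<close> by (simp add: c_def)
    have "D * (a0 + c * (a1 - a0) + q / k * c * (a2 - a0))
        = a0 * D + (c * D) * (a1 - a0) + q * (c * D) / k * (a2 - a0)"
      by (simp add: algebra_simps)
    also have "\<dots> = a0 * D + k * (k - r) * (a1 - a0) + q * (k - r) * (a2 - a0)"
      unfolding cD using \<open>k > 0\<close> by simp
    also have "\<dots> = k * (k - q) * a0 + k * (k - r) * a1 + q * (k - r) * a2"
      by (simp add: D_def power2_eq_square algebra_simps)
    finally show ?thesis
      using \<open>D > 0\<close> by (simp add: field_simps)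
  qed
  ultimately show ?thesis
    by (simp add: D_def)
qed

lemma level_mean_Suc_period_two:
  fixes k q a0 a1 a2 :: real and N0 N1 N2 :: "nat \<Rightarrow> real"
  assumes "k > 0"
    and R1: "\<And>j. N1 (Suc j) = k * N0 j + k * N2 j"
    and R2: "\<And>j. N2 (Suc j) = q * N1 j"
    and S: "\<And>j. N0 j + N1 j + N2 j = k ^ j"
  shows "N1 (Suc j) / k ^ Suc j = 1 - N1 j / k ^ j"
    and "(N0 (Suc j) * a0 + N1 (Suc j) * a1 + N2 (Suc j) * a2) / k ^ Suc j
      = a1 + N1 j / k ^ j * (((k - q) * a0 + q * a2) / k - a1)"
proof -
  have N0: "N0 j = k ^ j - N1 j - N2 j" for j
    using S[of j] by simp
  have N1_Suc: "N1 (Suc j) = k * (k ^ j - N1 j)"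
    unfolding R1 N0 by (simp add: algebra_simps)
  then show "N1 (Suc j) / k ^ Suc j = 1 - N1 j / k ^ j"
    using \<open>k > 0\<close> by (simp add: field_simps)
  have N0_Suc: "N0 (Suc j) = (k - q) * N1 j"
    unfolding N0[of "Suc j"] N1_Suc R2 by (simp add: algebra_simps)
  show "(N0 (Suc j) * a0 + N1 (Suc j) * a1 + N2 (Suc j) * a2) / k ^ Suc j
      = a1 + N1 j / k ^ j * (((k - q) * a0 + q * a2) / k - a1)"
    using \<open>k > 0\<close> unfolding N0_Suc N1_Suc R2 by (simp add: field_simps)
qed

section \<open>Alternating boundary conditions\<close>

lemma sum_lessThan_by_fibres:
  fixes \<phi> :: "nat \<Rightarrow> 'b" and g :: "'b \<Rightarrow> real"
  assumes "finite L" and "(\<Sum>l\<in>L. card {i. i < k \<and> \<phi> i = l}) = k"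
  shows "\<forall>i<k. \<phi> i \<in> L"
    and "(\<Sum>i<k. g (\<phi> i)) = (\<Sum>l\<in>L. real (card {i. i < k \<and> \<phi> i = l}) * g l)"
proof -
  define F where "F l = {i. i < k \<and> \<phi> i = l}" for l
  have disj: "\<forall>l\<in>L. \<forall>l'\<in>L. l \<noteq> l' \<longrightarrow> F l \<inter> F l' = {}"
    by (auto simp: F_def)
  have "card (\<Union>l\<in>L. F l) = card {..<k}"
    using assms disj by (subst card_UN_disjoint) (auto simp: F_def)
  then have cover: "(\<Union>l\<in>L. F l) = {..<k}"
    by (intro card_subset_eq) (auto simp: F_def)
  then show "\<forall>i<k. \<phi> i \<in> L"
    by (auto simp: F_def)
  have "(\<Sum>i<k. g (\<phi> i)) = (\<Sum>l\<in>L. \<Sum>i\<in>F l. g (\<phi> i))"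
    unfolding cover[symmetric] using assms(1) disj by (intro sum.UNION_disjoint) (auto simp: F_def)
  also have "\<dots> = (\<Sum>l\<in>L. real (card (F l)) * g l)"
    by (intro sum.cong refl) (simp add: F_def)
  finally show "(\<Sum>i<k. g (\<phi> i)) = (\<Sum>l\<in>L. real (card {i. i < k \<and> \<phi> i = l}) * g l)"
    by (simp add: F_def)
qed

(* A vertex labelled \<plusminus>2 has all its children labelled l div 2 = \<plusminus>1. *)
definition label_child_sum :: "nat \<Rightarrow> nat \<Rightarrow> nat \<Rightarrow> (int \<Rightarrow> real) \<Rightarrow> int \<Rightarrow> real" where
  "label_child_sum k q r g l =
     (if l = 0 then real r * g 0 + real ((k - r) div 2) * (g 1 + g (-1))
      else if l = 1 \<or> l = -1 then real q * g (2 * l) + real (k - q) * g 0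
      else real k * g (l div 2))"

lemma alternating_children:
  assumes alt: "alternating_labeling k q r lab" and "r \<le> k" and "r mod 2 = k mod 2" and "q \<le> k"
    and x: "x \<in> htV k" and lx: "lab x \<in> {-2..2}"
  shows "\<forall>i<k. lab (i # x) \<in> {-2..2}"
    and "(\<Sum>i<k. g (lab (i # x))) = label_child_sum k q r g (lab x)"
proof -
  let ?c = "\<lambda>l. card {i. i < k \<and> lab (i # x) = l}"
  have half: "(k - r) div 2 + (k - r) div 2 = k - r"
    using assms(2,3) by presburger
  have "(lab x = 0 \<longrightarrow> ?c 0 = r \<and> ?c 1 = (k - r) div 2 \<and> ?c (-1) = (k - r) div 2)
      \<and> (\<forall>s\<in>{-1, 1}. lab x = s \<longrightarrow> ?c (2 * s) = q \<and> ?c 0 = k - q)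
      \<and> (\<forall>s\<in>{-1, 1}. lab x = 2 * s \<longrightarrow> (\<forall>i<k. lab (i # x) = s))"
    using alt x unfolding alternating_labeling_def by blast
  then have zero: "lab x = 0 \<Longrightarrow> ?c 0 = r \<and> ?c 1 = (k - r) div 2 \<and> ?c (-1) = (k - r) div 2"
    and one: "\<And>s. s \<in> {1, -1} \<Longrightarrow> lab x = s \<Longrightarrow> ?c (2 * s) = q \<and> ?c 0 = k - q"
    and two: "\<And>s. s \<in> {1, -1} \<Longrightarrow> lab x = 2 * s \<Longrightarrow> \<forall>i<k. lab (i # x) = s"
    by blast+
  have "lab x = 0 \<or> lab x \<in> {1, -1} \<or> lab x \<in> {2, -2}"
    using lx by auto
  then consider
      "?c 0 = r" "?c 1 = (k - r) div 2" "?c (-1) = (k - r) div 2" "lab x = 0"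
    | s where "s \<in> {1, -1}" "?c (2 * s) = q" "?c 0 = k - q" "lab x = s"
    | s where "s \<in> {1, -1}" "\<forall>i<k. lab (i # x) = s" "lab x = 2 * s"
  proof (elim disjE)
    assume "lab x \<in> {2, -2}"
    then obtain s where "s \<in> {1, -1}" "lab x = 2 * s"
      by auto
    then show thesis
      using that(3) two by blast
  qed (use zero one that in blast)+
  then have "(\<forall>i<k. lab (i # x) \<in> {-2..2}) \<and>
      (\<Sum>i<k. g (lab (i # x))) = label_child_sum k q r g (lab x)"
  proof cases
    case 1
    have "(\<Sum>l\<in>{0, 1, -1}. ?c l) = k"
      using 1 half assms(2) by simp
    from sum_lessThan_by_fibres[OF _ this] show ?thesis
      using 1 by (auto simp: label_child_sum_def algebra_simps)
  next
    case (2 s)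
    have "(\<Sum>l\<in>{2 * s, 0}. ?c l) = k"
      using 2 assms(4) by auto
    from sum_lessThan_by_fibres[OF _ this] show ?thesis
      using 2 by (auto simp: label_child_sum_def algebra_simps)
  next
    case (3 s)
    then show ?thesis
      by (auto simp: label_child_sum_def)
  qed
  then show "\<forall>i<k. lab (i # x) \<in> {-2..2}" and "(\<Sum>i<k. g (lab (i # x))) = label_child_sum k q r g (lab x)"
    by blast+
qed

lemma alternating_label_range:
  assumes "alternating_labeling k q r lab" and "r \<le> k" and "r mod 2 = k mod 2" and "q \<le> k"
  shows "x \<in> htV k \<Longrightarrow> lab x \<in> {-2..2}"
proof (induction x)
  case Nil
  have "lab [] \<in> {-2, -1, 0, 1, 2}"
    using assms(1) unfolding alternating_labeling_def by (elim conjE)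
  then show ?case
    by auto
next
  case (Cons i x)
  then have "x \<in> htV k" and "i < k"
    by (auto simp: htV_def)
  with Cons.IH show ?case
    using alternating_children(1)[OF assms] by blast
qed

lemma alternating_bc_compatible:
  assumes "r \<le> k" and "r mod 2 = k mod 2" and "q \<le> k"
    and "h1 = real q * f_theta beta J h2" and "h2 = real k * f_theta beta J h1"
    and "alternating_bc k q r h1 h2 lab h"
  shows "compatible_bc k beta J h"
  unfolding compatible_bc_def
proof
  fix x
  assume x: "x \<in> htV k"
  have alt: "alternating_labeling k q r lab" and hv: "\<forall>y\<in>htV k. h y = bc_val h1 h2 (lab y)"
    using assms(6) by (auto simp: alternating_bc_def)
  note range = alternating_label_range[OF alt assms(1-3), OF x]
  define F where "F l = f_theta beta J (bc_val h1 h2 l)" for l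
  have "(\<Sum>i<k. f_theta beta J (h (i # x))) = (\<Sum>i<k. F (lab (i # x)))"
    using x hv by (intro sum.cong) (auto simp: F_def htV_def)
  also have "\<dots> = label_child_sum k q r F (lab x)"
    by (rule alternating_children(2)[OF alt assms(1-3) x range])
  also have "\<dots> = bc_val h1 h2 (lab x)"
  proof -
    have "lab x \<in> {0, 1, -1, 2, -2}"
      using range by auto
    then show ?thesis
      using assms(4,5)[symmetric]
      by (elim insertE) (simp_all add: label_child_sum_def F_def bc_val_def f_theta_minus)
  qed
  finally show "h x = (\<Sum>i<k. f_theta beta J (h (i # x)))"
    using hv x by simp
qed

definition level_count :: "nat \<Rightarrow> (nat list \<Rightarrow> int) \<Rightarrow> int \<Rightarrow> nat \<Rightarrow> real" where
  "level_count k lab c n = (\<Sum>y\<in>htWn k n. of_bool (\<bar>lab y\<bar> = c))"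

lemma alternating_level_count:
  assumes alt: "alternating_labeling k q r lab" and "r \<le> k" and "r mod 2 = k mod 2" and "q \<le> k"
  shows "level_count k lab 1 (Suc n) = (real k - real r) * level_count k lab 0 n + real k * level_count k lab 2 n"
    and "level_count k lab 2 (Suc n) = real q * level_count k lab 1 n"
    and "level_count k lab 0 n + level_count k lab 1 n + level_count k lab 2 n = real k ^ n"
proof -
  have range: "lab x \<in> {-2..2}" if "x \<in> htWn k n" for x
    using alternating_label_range[OF assms] that by (simp add: htWn_def)
  have children: "(\<Sum>y\<in>htWn k (Suc n). g (lab y)) = (\<Sum>x\<in>htWn k n. label_child_sum k q r g (lab x))" for g
    unfolding sum_htWn_Suc using range alternating_children(2)[OF assms] by (simp add: htWn_def)
  have "(k - r) div 2 * 2 = k - r"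
    using assms(2,3) by presburger
  then have half: "real ((k - r) div 2) * 2 = real k - real r"
    using assms(2) by (metis of_nat_diff of_nat_mult of_nat_numeral)
  have "label_child_sum k q r (\<lambda>l. of_bool (\<bar>l\<bar> = 1)) l
      = (real k - real r) * of_bool (\<bar>l\<bar> = 0) + real k * of_bool (\<bar>l\<bar> = 2)"
    and "label_child_sum k q r (\<lambda>l. of_bool (\<bar>l\<bar> = 2)) l = real q * of_bool (\<bar>l\<bar> = 1)"
    if "l \<in> {-2..2}" for l
  proof -
    have "l \<in> {0, 1, -1, 2, -2}"
      using that by auto
    then show "label_child_sum k q r (\<lambda>l. of_bool (\<bar>l\<bar> = 1)) l
        = (real k - real r) * of_bool (\<bar>l\<bar> = 0) + real k * of_bool (\<bar>l\<bar> = 2)"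
      and "label_child_sum k q r (\<lambda>l. of_bool (\<bar>l\<bar> = 2)) l = real q * of_bool (\<bar>l\<bar> = 1)"
      using half by (auto simp: label_child_sum_def)
  qed
  with range show "level_count k lab 1 (Suc n)
      = (real k - real r) * level_count k lab 0 n + real k * level_count k lab 2 n"
    and "level_count k lab 2 (Suc n) = real q * level_count k lab 1 n"
    unfolding level_count_def children[of "\<lambda>l. of_bool (\<bar>l\<bar> = 1)"]
      children[of "\<lambda>l. of_bool (\<bar>l\<bar> = 2)"]
    by (simp_all add: sum_distrib_left sum.distrib[symmetric] cong: sum.cong)
  have "level_count k lab 0 n + level_count k lab 1 n + level_count k lab 2 n = (\<Sum>y\<in>htWn k n. 1)"
    unfolding level_count_def sum.distrib[symmetric] using range by (intro sum.cong) force+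
  then show "level_count k lab 0 n + level_count k lab 1 n + level_count k lab 2 n = real k ^ n"
    by (simp add: card_htWn)
qed

lemma level_energy_alternating_bc:
  assumes "alternating_bc k q r h1 h2 lab h" and "r \<le> k" and "r mod 2 = k mod 2" and "q \<le> k"
  shows "level_energy k beta J h n = level_count k lab 0 n * afun beta J 0
    + level_count k lab 1 n * afun beta J h1 + level_count k lab 2 n * afun beta J h2"
proof -
  have "afun beta J (h y) = of_bool (\<bar>lab y\<bar> = 0) * afun beta J 0
      + of_bool (\<bar>lab y\<bar> = 1) * afun beta J h1 + of_bool (\<bar>lab y\<bar> = 2) * afun beta J h2"
    if "y \<in> htWn k n" for y
  proof -
    have "y \<in> htV k"
      using that by (simp add: htWn_def)
    then have "h y = bc_val h1 h2 (lab y)" and "lab y \<in> {0, 1, -1, 2, -2}"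
      using assms alternating_label_range[of k q r lab y] by (auto simp: alternating_bc_def)
    then show ?thesis
      by (elim insertE) (simp_all add: bc_val_def afun_minus)
  qed
  then show ?thesis
    by (simp add: level_energy_def level_count_def sum.distrib sum_distrib_right cong: sum.cong)
qed

lemma free_energy_alternating_tendsto:
  assumes "beta > 0" and "q < k" and "0 < r" and "r \<le> k" and "r mod 2 = k mod 2"
    and "compatible_bc k beta J h" and "alternating_bc k q r h1 h2 lab h"
  shows "(\<lambda>n. free_energy k beta J n h) \<longlonglongrightarrow>
    (real k * (real k - real q) * afun beta J 0 + real k * (real k - real r) * afun beta J h1
      + real q * (real k - real r) * afun beta J h2) / (2 * real k ^ 2 - real r * real k - real r * real q)"
proof (rule free_energy_tendsto[OF assms(1) _ assms(6)])
  have alt: "alternating_labeling k q r lab"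
    using assms(7) by (simp add: alternating_bc_def)
  note counts = alternating_level_count[OF alt assms(4,5) less_imp_le[OF assms(2)]]
  show "k \<ge> 1"
    using assms(2) by simp
  show "(\<lambda>n. level_energy k beta J h n / real k ^ n) \<longlonglongrightarrow>
    (real k * (real k - real q) * afun beta J 0 + real k * (real k - real r) * afun beta J h1
      + real q * (real k - real r) * afun beta J h2) / (2 * real k ^ 2 - real r * real k - real r * real q)"
    unfolding level_energy_alternating_bc[OF assms(7,4,5) less_imp_le[OF assms(2)]]
    using assms(2-4) by (intro level_mean_tendsto counts) simp_all
qed

lemma free_energy_alternating_r0_tendsto:
  assumes "beta > 0" and "q \<le> k" and "k \<ge> 1" and "even k"
    and "compatible_bc k beta J h" and "alternating_bc k q 0 h1 h2 lab h"
  defines "p \<equiv> ((real k - real q) * afun beta J 0 + real q * afun beta J h2) / real k"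
    and "\<delta> \<equiv> of_bool (\<bar>lab []\<bar> = 1)"
  defines "u \<equiv> afun beta J h1 + \<delta> * (p - afun beta J h1)"
    and "v \<equiv> afun beta J h1 + (1 - \<delta>) * (p - afun beta J h1)"
  shows "(\<lambda>m. free_energy k beta J (2 * m) h) \<longlonglongrightarrow> (u + real k * v) / (real k + 1)"
    and "(\<lambda>m. free_energy k beta J (2 * m + 1) h) \<longlonglongrightarrow> (v + real k * u) / (real k + 1)"
proof -
  have alt: "alternating_labeling k q 0 lab"
    using assms(6) by (simp add: alternating_bc_def)
  have "0 mod 2 = k mod 2"
    using assms(4) by simp
  note counts = alternating_level_count[OF alt _ this assms(2), simplified]
  define d where "d j = level_count k lab 1 j / real k ^ j" for j
  have "real k > 0"
    using assms(3) by simp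
  note period_two = level_mean_Suc_period_two[OF this counts]
  have energy: "level_energy k beta J h (Suc j) = (afun beta J h1 + d j * (p - afun beta J h1)) * real k ^ Suc j"
    for j
  proof -
    have "level_energy k beta J h (Suc j) / real k ^ Suc j = afun beta J h1 + d j * (p - afun beta J h1)"
      unfolding level_energy_alternating_bc[OF assms(6) _ \<open>0 mod 2 = k mod 2\<close> assms(2), simplified]
        d_def p_def by (rule period_two(2))
    then show ?thesis
      using \<open>real k > 0\<close> by (simp add: divide_eq_eq)
  qed
  have "d 0 = \<delta>"
    by (simp add: d_def \<delta>_def level_count_def htWn_0)
  moreover have flip: "d (Suc j) = 1 - d j" for j
    unfolding d_def by (rule period_two(1))
  ultimately have d: "d (2 * m) = \<delta> \<and> d (Suc (2 * m)) = 1 - \<delta>" for m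
    by (induction m) simp_all
  have "level_energy k beta J h (Suc (2 * m)) = u * real k ^ Suc (2 * m)"
    and "level_energy k beta J h (Suc (Suc (2 * m))) = v * real k ^ Suc (Suc (2 * m))"
    and "level_energy k beta J h (Suc (Suc (Suc (2 * m)))) = u * real k ^ Suc (Suc (Suc (2 * m)))" for m
    using energy[of "2 * m"] energy[of "Suc (2 * m)"] energy[of "2 * Suc m"] d[of m] d[of "Suc m"]
    by (simp_all add: u_def v_def)
  then show "(\<lambda>m. free_energy k beta J (2 * m) h) \<longlonglongrightarrow> (u + real k * v) / (real k + 1)"
    and "(\<lambda>m. free_energy k beta J (2 * m + 1) h) \<longlonglongrightarrow> (v + real k * u) / (real k + 1)"
    using free_energy_two_periodic_tendsto[OF assms(1,3,5), of 0 u v]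
      free_energy_two_periodic_tendsto[OF assms(1,3,5), of 1 v u]
    by simp_all
qed

theorem proposition1:
  fixes k q r :: nat and beta J h1 h2 :: real
    and lab :: "nat list \<Rightarrow> int" and h :: "nat list \<Rightarrow> real"
  assumes "k \<ge> 2" and "1 \<le> q" and "q \<le> k - 1" and "r \<le> k" and "r mod 2 = k mod 2"
    and "beta > 0"
    and "h1 = real q * artanh (tanh (beta * J) * tanh h2)"
    and "h2 = real k * artanh (tanh (beta * J) * tanh h1)"
    and "alternating_bc k q r h1 h2 lab h"
  shows
   "(r \<noteq> 0 \<longrightarrow>
      (\<lambda>n. free_energy k beta J n h) \<longlonglongrightarrow>
        real (k * (k - q)) / (2 * real k ^ 2 - real r * real k - real r * real q) *
          (afun beta J 0 + (real k - real r) / (real k - real q) * afun beta J h1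
           + real q * (real k - real r) / (real k * (real k - real q)) * afun beta J h2))
    \<and> (r = 0 \<and> lab [] \<in> {0, 2, -2} \<longrightarrow>
      (\<lambda>m. free_energy k beta J (2 * m) h) \<longlonglongrightarrow>
        (real k - real q) / (real k + 1) * afun beta J 0 + 1 / (real k + 1) * afun beta J h1
        + real q / (real k + 1) * afun beta J h2
      \<and> (\<lambda>m. free_energy k beta J (2 * m + 1) h) \<longlonglongrightarrow>
        (real k - real q) / (real k * (real k + 1)) * afun beta J 0 + real k / (real k + 1) * afun beta J h1
        + real q / (real k * (real k + 1)) * afun beta J h2)
    \<and> (r = 0 \<and> lab [] \<in> {1, -1} \<longrightarrow>
      (\<lambda>m. free_energy k beta J (2 * m) h) \<longlonglongrightarrow>
        (real k - real q) / (real k * (real k + 1)) * afun beta J 0 + real k / (real k + 1) * afun beta J h1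
        + real q / (real k * (real k + 1)) * afun beta J h2
      \<and> (\<lambda>m. free_energy k beta J (2 * m + 1) h) \<longlonglongrightarrow>
        (real k - real q) / (real k + 1) * afun beta J 0 + 1 / (real k + 1) * afun beta J h1
        + real q / (real k + 1) * afun beta J h2)"
proof -
  let ?a0 = "afun beta J 0" and ?a1 = "afun beta J h1" and ?a2 = "afun beta J h2"
  let ?p = "((real k - real q) * ?a0 + real q * ?a2) / real k"
  have "q < k" and "real k > 0"
    using assms(1,3) by simp_all
  have compat: "compatible_bc k beta J h"
    using assms(4,5,7-9) \<open>q < k\<close> by (intro alternating_bc_compatible) (simp_all add: f_theta_def)
  have "r \<noteq> 0 \<longrightarrow> (\<lambda>n. free_energy k beta J n h) \<longlonglongrightarrow>
      real (k * (k - q)) / (2 * real k ^ 2 - real r * real k - real r * real q) *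
        (?a0 + (real k - real r) / (real k - real q) * ?a1
         + real q * (real k - real r) / (real k * (real k - real q)) * ?a2)"
  proof -
    have "real (k * (k - q)) * (?a0 + (real k - real r) / (real k - real q) * ?a1
         + real q * (real k - real r) / (real k * (real k - real q)) * ?a2)
        = real k * (real k - real q) * ?a0 + real k * (real k - real r) * ?a1
          + real q * (real k - real r) * ?a2"
      using \<open>q < k\<close> \<open>real k > 0\<close> by (simp add: of_nat_diff distrib_left)
    then show ?thesis
      using free_energy_alternating_tendsto[OF assms(6) \<open>q < k\<close> _ assms(4,5) compat assms(9)]
      by (simp only: times_divide_eq_left) simp
  qed
  moreover have
    "(?a1 + real k * ?p) / (real k + 1)
      = (real k - real q) / (real k + 1) * ?a0 + 1 / (real k + 1) * ?a1 + real q / (real k + 1) * ?a2"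
    "(?p + real k * ?a1) / (real k + 1)
      = (real k - real q) / (real k * (real k + 1)) * ?a0 + real k / (real k + 1) * ?a1
        + real q / (real k * (real k + 1)) * ?a2"
    using \<open>real k > 0\<close> by (simp_all add: divide_simps)
  moreover have "r = 0 \<Longrightarrow> even k" and "k \<ge> 1"
    using assms(1,5) by (simp_all add: even_iff_mod_2_eq_zero)
  ultimately show ?thesis
    using free_energy_alternating_r0_tendsto[OF assms(6) less_imp_le[OF \<open>q < k\<close>] _ _ compat, of h1 h2 lab]
      assms(9) by auto
qed

end
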